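(* Let $X$ be a $T_0$ topological space with a countable basis. The following are equivalent: (1) player Nonempty has a convergent winning strategy in the Choquet game $\mathit{Ch}(X)$; (2) player Nonempty has a stationary convergent winning strategy in $\mathit{Ch}(X)$; (3) $X$ is quasi-Polish.
   Context: Choquet game $\mathit{Ch}(X)$: players Empty and Nonempty alternate for $\omega$ rounds; in round $i$ Empty chooses $(x_i,U_i)$ with $U_i$ open, $x_i\in U_i$, and $U_i\subseteq V_{i-1}$ for $i\ge1$; Nonempty answers with an open $V_i$ with $x_i\in V_i\subseteq U_i$. Nonempty wins iff $\bigcap_iV_i\ne\emptyset$. A strategy maps partial plays ending with a move of the opponent to a move; it is winning if every play following it is won. A winning strategy for Nonempty is stationary if it depends only on the last move of Empty, and convergent if in every play following it the $V_i$ form a neighborhood basis of some point of $\bigcap_iV_i$. Quasi-Polish: second countable space whose topology is induced by a complete quasi-metric ($d:X^2\to[0,\infty)$ with $x=y\iff d(x,y)=d(y,x)=0$ and triangle inequality; complete: every sequence with $\lim_n\sup_{p\ge n}d(x_n,x_p)=0$ converges for $\max(d(x,y),d(y,x))$). *)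

theory Defs
  imports "HOL-Analysis.Analysis"
begin

text \<open>A move of Empty is a pair (x, U); a move of Nonempty is an open set V.
  A partial play is recorded as the list of completed rounds ((x_j, U_j), V_j);
  a strategy for Nonempty maps such a history together with the current move
  of Empty to the answer of Nonempty.\<close>

type_synonym 'a ch_history = "(('a \<times> 'a set) \<times> 'a set) list"
type_synonym 'a ch_strategy = "'a ch_history \<Rightarrow> ('a \<times> 'a set) \<Rightarrow> 'a set"

definition ch_hist :: "(nat \<Rightarrow> 'a) \<Rightarrow> (nat \<Rightarrow> 'a set) \<Rightarrow> (nat \<Rightarrow> 'a set) \<Rightarrow> nat \<Rightarrow> 'a ch_history" where
  "ch_hist x U V n = map (\<lambda>j. ((x j, U j), V j)) [0..<n]"

definition ch_empty_ok :: "'a topology \<Rightarrow> (nat \<Rightarrow> 'a) \<Rightarrow> (nat \<Rightarrow> 'a set) \<Rightarrow> (nat \<Rightarrow> 'a set) \<Rightarrow> nat \<Rightarrow> bool" where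
  "ch_empty_ok X x U V i \<longleftrightarrow> openin X (U i) \<and> x i \<in> U i \<and> (0 < i \<longrightarrow> U i \<subseteq> V (i - 1))"

text \<open>A partial play following sigma that ends with the move (x n, U n) of Empty.\<close>
definition ch_partial_play :: "'a topology \<Rightarrow> 'a ch_strategy \<Rightarrow> (nat \<Rightarrow> 'a) \<Rightarrow> (nat \<Rightarrow> 'a set) \<Rightarrow> (nat \<Rightarrow> 'a set) \<Rightarrow> nat \<Rightarrow> bool" where
  "ch_partial_play X \<sigma> x U V n \<longleftrightarrow>
     (\<forall>i\<le>n. ch_empty_ok X x U V i) \<and> (\<forall>i<n. V i = \<sigma> (ch_hist x U V i) (x i, U i))"

definition ch_play :: "'a topology \<Rightarrow> 'a ch_strategy \<Rightarrow> (nat \<Rightarrow> 'a) \<Rightarrow> (nat \<Rightarrow> 'a set) \<Rightarrow> (nat \<Rightarrow> 'a set) \<Rightarrow> bool" where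
  "ch_play X \<sigma> x U V \<longleftrightarrow>
     (\<forall>i. ch_empty_ok X x U V i \<and> V i = \<sigma> (ch_hist x U V i) (x i, U i))"

definition ch_winning :: "'a topology \<Rightarrow> 'a ch_strategy \<Rightarrow> bool" where
  "ch_winning X \<sigma> \<longleftrightarrow>
     (\<forall>x U V n. ch_partial_play X \<sigma> x U V n \<longrightarrow>
        openin X (\<sigma> (ch_hist x U V n) (x n, U n)) \<and>
        x n \<in> \<sigma> (ch_hist x U V n) (x n, U n) \<and>
        \<sigma> (ch_hist x U V n) (x n, U n) \<subseteq> U n) \<and>
     (\<forall>x U V. ch_play X \<sigma> x U V \<longrightarrow> (\<Inter>i. V i) \<noteq> {})"

definition ch_stationary :: "'a ch_strategy \<Rightarrow> bool" where
  "ch_stationary \<sigma> \<longleftrightarrow> (\<exists>f. \<forall>h m. \<sigma> h m = f m)"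

definition ch_convergent :: "'a topology \<Rightarrow> 'a ch_strategy \<Rightarrow> bool" where
  "ch_convergent X \<sigma> \<longleftrightarrow>
     (\<forall>x U V. ch_play X \<sigma> x U V \<longrightarrow>
        (\<exists>y \<in> (\<Inter>i. V i). \<forall>W. openin X W \<and> y \<in> W \<longrightarrow> (\<exists>i. V i \<subseteq> W)))"

text \<open>Quasi-metrics on the carrier S, the topology they induce (open balls
  {y. d x y < e}), and completeness
  (lim_n sup_{p>=n} d(s n, s p) = 0, written out with epsilons so that
  unbounded suprema are handled correctly).\<close>
definition quasi_metric_on :: "'a set \<Rightarrow> ('a \<Rightarrow> 'a \<Rightarrow> real) \<Rightarrow> bool" where
  "quasi_metric_on S d \<longleftrightarrow>
     (\<forall>x\<in>S. \<forall>y\<in>S. 0 \<le> d x y) \<and>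
     (\<forall>x\<in>S. \<forall>y\<in>S. x = y \<longleftrightarrow> d x y = 0 \<and> d y x = 0) \<and>
     (\<forall>x\<in>S. \<forall>y\<in>S. \<forall>z\<in>S. d x z \<le> d x y + d y z)"

definition qm_induces :: "'a topology \<Rightarrow> ('a \<Rightarrow> 'a \<Rightarrow> real) \<Rightarrow> bool" where
  "qm_induces X d \<longleftrightarrow>
     (\<forall>W. openin X W \<longleftrightarrow>
        W \<subseteq> topspace X \<and>
        (\<forall>x\<in>W. \<exists>e>0. \<forall>y\<in>topspace X. d x y < e \<longrightarrow> y \<in> W))"

definition qm_complete :: "'a set \<Rightarrow> ('a \<Rightarrow> 'a \<Rightarrow> real) \<Rightarrow> bool" where
  "qm_complete S d \<longleftrightarrow>
     (\<forall>s. range s \<subseteq> S \<longrightarrow>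
        (\<forall>e>0. \<exists>N. \<forall>n\<ge>N. \<forall>p\<ge>n. d (s n) (s p) \<le> e) \<longrightarrow>
        (\<exists>y\<in>S. (\<lambda>n. max (d (s n) y) (d y (s n))) \<longlonglongrightarrow> 0))"

definition quasi_Polish :: "'a topology \<Rightarrow> bool" where
  "quasi_Polish X \<longleftrightarrow> second_countable X \<and>
     (\<exists>d. quasi_metric_on (topspace X) d \<and> qm_induces X d \<and> qm_complete (topspace X) d)"

end

theory Submission
  imports Defs
begin

text \<open>
  The strategy side and the metric side meet in one combinatorial object: a countable family of
  sequences \<open>W m\<close> of open sets, containing a base as constant sequences, such that every sequence
  whose levels (the index of the first \<open>W m i\<close> containing a point) are eventually nonincreasing
  has a limit point realising the eventual levels. From such a family, Nonempty wins by answering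
  the points that are no deeper than \<open>x\<close> in the first few families, and
  \<open>d(x, y) = \<Sum> 2^-m [level_m x < level_m y]\<close> is a complete quasi-metric. Conversely, a
  convergent winning strategy yields such a family indexed by the finite positions of the game
  coded by basic open sets: a level-Cauchy sequence steers a play following the strategy, and its
  limit is the required point. Finally, in a complete quasi-metric space Nonempty wins
  convergently by answering balls of halving radii.
\<close>

section \<open>Levels with respect to a sequence of sets\<close>

definition level :: "(nat \<Rightarrow> 'a set) \<Rightarrow> 'a \<Rightarrow> enat" where
  "level W x = (if \<exists>i. x \<in> W i then enat (LEAST i. x \<in> W i) else \<infinity>)"

lemma level_eq_LeastI: "x \<in> W i \<Longrightarrow> level W x = enat (LEAST i. x \<in> W i)"
  unfolding level_def by auto

lemma level_eq_infinity_iff: "level W x = \<infinity> \<longleftrightarrow> (\<forall>i. x \<notin> W i)"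
  unfolding level_def by auto

lemma level_le_of_mem: "x \<in> W i \<Longrightarrow> level W x \<le> enat i"
  by (simp add: level_eq_LeastI Least_le)

lemma level_le_enat_iff: "level W x \<le> enat k \<longleftrightarrow> (\<exists>i\<le>k. x \<in> W i)"
proof
  assume le: "level W x \<le> enat k"
  have ex: "\<exists>i. x \<in> W i"
  proof (rule ccontr)
    assume "\<not> (\<exists>i. x \<in> W i)"
    then have "level W x = \<infinity>"
      unfolding level_def by (rule if_not_P)
    then show False
      using le by simp
  qed
  have "x \<in> W (LEAST i. x \<in> W i)"
    using ex by (rule LeastI_ex)
  moreover have "(LEAST i. x \<in> W i) \<le> k"
    using le ex unfolding level_def by simp
  ultimately show "\<exists>i\<le>k. x \<in> W i"
    by blast
next
  assume "\<exists>i\<le>k. x \<in> W i"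
  then obtain i where "i \<le> k" "x \<in> W i"
    by blast
  then have "level W x \<le> enat i" "enat i \<le> enat k"
    using level_le_of_mem by simp_all
  then show "level W x \<le> enat k"
    by (rule order_trans)
qed

lemma mem_of_level_eq:
  assumes "level W x = enat k"
  shows "x \<in> W k"
proof -
  have ex: "\<exists>i. x \<in> W i"
  proof (rule ccontr)
    assume "\<not> (\<exists>i. x \<in> W i)"
    then have "level W x = \<infinity>" unfolding level_def by (rule if_not_P)
    then show False using assms by simp
  qed
  then have "k = (LEAST i. x \<in> W i)"
    using assms unfolding level_def by simp
  then show ?thesis
    using LeastI_ex[OF ex] by simp
qed

lemma level_const: "level (\<lambda>_. S) x = (if x \<in> S then 0 else \<infinity>)"
proof (cases "x \<in> S")
  case True
  then have "level (\<lambda>_. S) x \<le> 0"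
    using level_le_of_mem[of x "\<lambda>_. S" 0] by (simp add: zero_enat_def)
  then show ?thesis
    using True by simp
qed (simp add: level_eq_infinity_iff)

lemma eventually_const_if_eventually_antimono:
  fixes f :: "nat \<Rightarrow> 'b::wellorder"
  assumes "\<forall>\<^sub>F k in sequentially. \<forall>p\<ge>k. f p \<le> f k"
  shows "\<exists>c. \<forall>\<^sub>F k in sequentially. f k = c"
proof -
  obtain N where N: "\<And>k p. N \<le> k \<Longrightarrow> k \<le> p \<Longrightarrow> f p \<le> f k"
    using assms by (auto simp: eventually_sequentially)
  define c where "c = (LEAST c. \<exists>p\<ge>N. f p = c)"
  have "\<exists>p\<ge>N. f p = c"
    unfolding c_def by (rule LeastI_ex) auto
  then obtain p where p: "p \<ge> N" "f p = c" by blast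
  have "f k = c" if "k \<ge> p" for k
  proof (rule antisym)
    show "f k \<le> c"
      using N[of p k] p that by simp
    show "c \<le> f k"
      unfolding c_def by (rule Least_le) (use p that in \<open>intro exI[of _ k], auto\<close>)
  qed
  then show ?thesis
    unfolding eventually_sequentially by blast
qed

lemma eventually_mem_if_eventually_antimono_level:
  assumes "\<forall>\<^sub>F k in sequentially. \<forall>p\<ge>k. level W (s p) \<le> level W (s k)"
    and "\<forall>\<^sub>F k in sequentially. s k \<in> (\<Union>i. W i)"
  shows "\<exists>i. \<forall>\<^sub>F k in sequentially. s k \<in> W i"
proof -
  obtain c where c: "\<forall>\<^sub>F k in sequentially. level W (s k) = c"
    using eventually_const_if_eventually_antimono[OF assms(1)] by blast
  obtain k where "level W (s k) = c" "s k \<in> (\<Union>i. W i)"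
    using eventually_happens'[OF sequentially_bot eventually_conj[OF c assms(2)]] by blast
  then obtain i where i: "c = enat i"
    using level_le_of_mem[of "s k" W] by (cases c) auto
  have "\<forall>\<^sub>F k in sequentially. s k \<in> W i"
    by (rule eventually_mono[OF c]) (simp add: i mem_of_level_eq)
  then show ?thesis ..
qed

lemma eventually_level_eq_if_eventually_antimono_level:
  assumes "\<forall>\<^sub>F k in sequentially. \<forall>p\<ge>k. level W (s p) \<le> level W (s k)"
    and lim: "\<And>i. (\<forall>\<^sub>F k in sequentially. s k \<in> W i) \<longleftrightarrow> y \<in> W i"
  shows "\<forall>\<^sub>F k in sequentially. level W (s k) = level W y"
proof -
  obtain c where c: "\<forall>\<^sub>F k in sequentially. level W (s k) = c"
    using eventually_const_if_eventually_antimono[OF assms(1)] by blast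
  have le_c: "level W y \<le> c"
  proof (cases c)
    case (enat i)
    have "\<forall>\<^sub>F k in sequentially. s k \<in> W i"
      by (rule eventually_mono[OF c]) (simp add: enat mem_of_level_eq)
    then show ?thesis
      using lim[of i] level_le_of_mem[of y W i] enat by simp
  qed simp
  have c_le: "c \<le> enat j" if "y \<in> W j" for j
  proof -
    have "\<forall>\<^sub>F k in sequentially. level W (s k) = c \<and> s k \<in> W j"
      using eventually_conj[OF c lim[THEN iffD2, OF that]] .
    then obtain k where "level W (s k) = c" "s k \<in> W j"
      using eventually_happens'[OF sequentially_bot] by blast
    then show ?thesis
      using level_le_of_mem[of "s k" W j] by simp
  qed
  have "c \<le> level W y"
  proof (cases "level W y")
    case (enat j)
    then show ?thesis
      using c_le[OF mem_of_level_eq[OF enat]] by simp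
  qed simp
  then show ?thesis
    using le_c by (intro eventually_mono[OF c]) simp
qed

definition level_cauchy :: "('j \<Rightarrow> nat \<Rightarrow> 'a set) \<Rightarrow> (nat \<Rightarrow> 'a) \<Rightarrow> bool" where
  "level_cauchy W s \<longleftrightarrow> (\<forall>m. \<forall>\<^sub>F k in sequentially. \<forall>p\<ge>k. level (W m) (s p) \<le> level (W m) (s k))"

definition level_limit :: "('j \<Rightarrow> nat \<Rightarrow> 'a set) \<Rightarrow> (nat \<Rightarrow> 'a) \<Rightarrow> 'a \<Rightarrow> bool" where
  "level_limit W s y \<longleftrightarrow> (\<forall>m. \<forall>\<^sub>F k in sequentially. level (W m) (s k) = level (W m) y)"

definition ch_legal :: "'a topology \<Rightarrow> 'a ch_strategy \<Rightarrow> bool" where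
  "ch_legal X \<sigma> \<longleftrightarrow> (\<forall>h x U. openin X U \<and> x \<in> U \<longrightarrow>
     openin X (\<sigma> h (x, U)) \<and> x \<in> \<sigma> h (x, U) \<and> \<sigma> h (x, U) \<subseteq> U)"

lemma ch_winning_convergentI:
  assumes legal: "ch_legal X \<sigma>"
    and converges: "\<And>x U V. ch_play X \<sigma> x U V \<Longrightarrow>
      \<exists>y. (\<forall>i. y \<in> V i) \<and> (\<forall>W. openin X W \<and> y \<in> W \<longrightarrow> (\<exists>i. V i \<subseteq> W))"
  shows "ch_winning X \<sigma> \<and> ch_convergent X \<sigma>"
proof -
  have "openin X (\<sigma> (ch_hist x U V n) (x n, U n)) \<and> x n \<in> \<sigma> (ch_hist x U V n) (x n, U n)
      \<and> \<sigma> (ch_hist x U V n) (x n, U n) \<subseteq> U n" if "ch_partial_play X \<sigma> x U V n" for x U V n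
  proof -
    have "openin X (U n)" "x n \<in> U n"
      using that unfolding ch_partial_play_def ch_empty_ok_def by auto
    then show ?thesis
      using legal unfolding ch_legal_def by blast
  qed
  moreover have "(\<Inter>i. V i) \<noteq> {}" if "ch_play X \<sigma> x U V" for x U V
    using converges[OF that] by blast
  moreover have "\<exists>y\<in>(\<Inter>i. V i). \<forall>W. openin X W \<and> y \<in> W \<longrightarrow> (\<exists>i. V i \<subseteq> W)"
    if "ch_play X \<sigma> x U V" for x U V
    using converges[OF that] by blast
  ultimately show ?thesis
    unfolding ch_winning_def ch_convergent_def by blast
qed

context
  fixes X :: "'a topology" and \<sigma> :: "'a ch_strategy" and x :: "nat \<Rightarrow> 'a" and U V :: "nat \<Rightarrow> 'a set"
  assumes legal: "ch_legal X \<sigma>" and play: "ch_play X \<sigma> x U V"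
begin

lemma ch_play_move:
  shows "openin X (U i)" "x i \<in> U i" "U (Suc i) \<subseteq> V i" "V i = \<sigma> (ch_hist x U V i) (x i, U i)"
  using play[unfolded ch_play_def, rule_format, of i] play[unfolded ch_play_def, rule_format, of "Suc i"]
  unfolding ch_empty_ok_def by auto

lemma ch_play_answer: "openin X (V i)" "x i \<in> V i" "V i \<subseteq> U i"
  using legal ch_play_move[of i] unfolding ch_legal_def by auto

lemma ch_play_point_in_topspace: "x i \<in> topspace X"
  using ch_play_move(1,2) openin_subset by blast

lemma ch_play_answer_antimono: "i \<le> j \<Longrightarrow> V j \<subseteq> V i"
proof (induction j rule: dec_induct)
  case (step j)
  then show ?case
    using ch_play_answer(3)[of "Suc j"] ch_play_move(3)[of j] by blast
qed simp

lemma ch_play_point_in_answer: "i \<le> j \<Longrightarrow> x j \<in> V i"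
  using ch_play_answer_antimono ch_play_answer(2) by blast

end

lemma ch_hist_Suc: "ch_hist x U V (Suc i) = ch_hist x U V i @ [((x i, U i), V i)]"
  by (simp add: ch_hist_def)

lemma ch_hist_cong:
  "(\<And>j. j < i \<Longrightarrow> x j = x' j \<and> U j = U' j \<and> V j = V' j) \<Longrightarrow> ch_hist x U V i = ch_hist x' U' V' i"
  unfolding ch_hist_def by (rule map_cong) auto

lemma ch_hist_snoc_upd:
  "ch_hist (x(Suc n := z)) (U(Suc n := W)) (V(n := v)) (Suc n) = ch_hist x U V n @ [((x n, U n), v)]"
proof -
  have "ch_hist (x(Suc n := z)) (U(Suc n := W)) (V(n := v)) n = ch_hist x U V n"
    by (rule ch_hist_cong) simp
  then show ?thesis
    by (simp add: ch_hist_Suc)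
qed

lemma ch_partial_play_snoc:
  assumes play: "ch_partial_play X \<sigma> x U V n"
    and W: "openin X W" "z \<in> W" "W \<subseteq> \<sigma> (ch_hist x U V n) (x n, U n)"
  shows "ch_partial_play X \<sigma> (x(Suc n := z)) (U(Suc n := W))
    (V(n := \<sigma> (ch_hist x U V n) (x n, U n))) (Suc n)"
    (is "ch_partial_play X \<sigma> ?x ?U ?V (Suc n)")
proof -
  have hist: "ch_hist ?x ?U ?V i = ch_hist x U V i" if "i \<le> n" for i
    by (rule ch_hist_cong) (use that in auto)
  have "ch_empty_ok X ?x ?U ?V i" if "i \<le> Suc n" for i
  proof (cases "i = Suc n")
    case False
    then have i: "i \<le> n" "0 < i \<longrightarrow> i - 1 \<noteq> n"
      using that by auto
    then have "ch_empty_ok X x U V i"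
      using play unfolding ch_partial_play_def by blast
    then show ?thesis
      using i unfolding ch_empty_ok_def by auto
  qed (use W in \<open>simp add: ch_empty_ok_def\<close>)
  moreover have "?V i = \<sigma> (ch_hist ?x ?U ?V i) (?x i, ?U i)" if "i < Suc n" for i
    using play hist[of i] that unfolding ch_partial_play_def by (cases "i = n") auto
  ultimately show ?thesis
    unfolding ch_partial_play_def by blast
qed

lemma ch_partial_play_if_play: "ch_play X \<sigma> x U V \<Longrightarrow> ch_partial_play X \<sigma> x U V n"
  unfolding ch_play_def ch_partial_play_def by blast

section \<open>Complete quasi-metrics give convergent strategies\<close>

locale complete_quasi_metric =
  fixes X :: "'a topology" and d :: "'a \<Rightarrow> 'a \<Rightarrow> real"
  assumes quasi_metric: "quasi_metric_on (topspace X) d"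
    and induces: "qm_induces X d"
    and complete: "qm_complete (topspace X) d"
begin

lemma qdist_self: "x \<in> topspace X \<Longrightarrow> d x x = 0"
  using quasi_metric unfolding quasi_metric_on_def by blast

lemma qdist_triangle:
  "x \<in> topspace X \<Longrightarrow> y \<in> topspace X \<Longrightarrow> z \<in> topspace X \<Longrightarrow> d x z \<le> d x y + d y z"
  using quasi_metric unfolding quasi_metric_on_def by blast

definition qball :: "'a \<Rightarrow> real \<Rightarrow> 'a set" where
  "qball x r = {y \<in> topspace X. d x y < r}"

lemma qball_subset_iff: "qball x e \<subseteq> W \<longleftrightarrow> (\<forall>y\<in>topspace X. d x y < e \<longrightarrow> y \<in> W)"
  by (auto simp: qball_def)

lemma openin_iff_qball:
  "openin X W \<longleftrightarrow> W \<subseteq> topspace X \<and> (\<forall>x\<in>W. \<exists>e>0. qball x e \<subseteq> W)"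
  using induces by (simp add: qm_induces_def qball_subset_iff)

lemma openin_qball:
  assumes "x \<in> topspace X"
  shows "openin X (qball x r)"
  unfolding openin_iff_qball
proof (intro conjI ballI)
  fix z assume z: "z \<in> qball x r"
  show "\<exists>e>0. qball z e \<subseteq> qball x r"
  proof (intro exI conjI)
    show "0 < r - d x z"
      using z by (simp add: qball_def)
    show "qball z (r - d x z) \<subseteq> qball x r"
    proof
      fix w assume "w \<in> qball z (r - d x z)"
      then show "w \<in> qball x r"
        using z qdist_triangle[OF assms, of z w] by (auto simp: qball_def)
    qed
  qed
qed (auto simp: qball_def)

lemma centre_in_qball: "x \<in> topspace X \<Longrightarrow> 0 < r \<Longrightarrow> x \<in> qball x r"
  by (simp add: qball_def qdist_self)

definition inner_radius :: "'a \<Rightarrow> 'a set \<Rightarrow> real" where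
  "inner_radius x U = (SOME e. 0 < e \<and> (openin X U \<and> x \<in> U \<longrightarrow> qball x e \<subseteq> U))"

lemma inner_radius: "0 < inner_radius x U" "openin X U \<Longrightarrow> x \<in> U \<Longrightarrow> qball x (inner_radius x U) \<subseteq> U"
proof -
  have "\<exists>e. 0 < e \<and> (openin X U \<and> x \<in> U \<longrightarrow> qball x e \<subseteq> U)"
  proof (cases "openin X U \<and> x \<in> U")
    case True
    then show ?thesis
      using openin_iff_qball by blast
  qed (auto intro: exI[of _ 1])
  from someI_ex[OF this]
  show "0 < inner_radius x U" "openin X U \<Longrightarrow> x \<in> U \<Longrightarrow> qball x (inner_radius x U) \<subseteq> U"
    unfolding inner_radius_def by blast+
qed

text \<open>\<open>history_radius h\<close> is the radius of Nonempty's last answer in \<open>h\<close> (initially \<open>1\<close>), so every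
  answer has at most half the radius of the previous one.\<close>

definition history_radius :: "'a ch_history \<Rightarrow> real" where
  "history_radius h = foldl (\<lambda>r ((x, U), _). min (inner_radius x U) r / 2) 1 h"

definition ball_strategy :: "'a ch_strategy" where
  "ball_strategy h m = qball (fst m) (min (inner_radius (fst m) (snd m)) (history_radius h) / 2)"

lemma history_radius_pos: "0 < history_radius h"
proof (induction h rule: rev_induct)
  case (snoc e h)
  then show ?case
    using inner_radius(1) by (auto simp: history_radius_def split: prod.splits)
qed (simp add: history_radius_def)

lemma ch_legal_ball_strategy: "ch_legal X ball_strategy"
  unfolding ch_legal_def
proof (intro allI impI)
  fix h x U
  assume xU: "openin X U \<and> x \<in> U"
  then have x: "x \<in> topspace X"
    using openin_subset by blast
  let ?r = "min (inner_radius x U) (history_radius h) / 2"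
  have "0 < ?r"
    using inner_radius(1) history_radius_pos by simp
  moreover have "qball x ?r \<subseteq> qball x (inner_radius x U)"
    using inner_radius(1)[of x U] by (auto simp: qball_def)
  ultimately show "openin X (ball_strategy h (x, U)) \<and> x \<in> ball_strategy h (x, U)
      \<and> ball_strategy h (x, U) \<subseteq> U"
    using inner_radius(2) xU openin_qball[OF x] centre_in_qball[OF x]
    unfolding ball_strategy_def by auto
qed

context
  fixes x :: "nat \<Rightarrow> 'a" and U V :: "nat \<Rightarrow> 'a set"
  assumes play: "ch_play X ball_strategy x U V"
begin

definition radius :: "nat \<Rightarrow> real" where
  "radius i = min (inner_radius (x i) (U i)) (history_radius (ch_hist x U V i)) / 2"

lemma answer_eq_qball: "V i = qball (x i) (radius i)"
  using ch_play_move(4)[OF ch_legal_ball_strategy play] by (simp add: ball_strategy_def radius_def)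

lemma radius_pos: "0 < radius i"
  unfolding radius_def using inner_radius(1) history_radius_pos by simp

lemma radius_le_inner_radius: "2 * radius i \<le> inner_radius (x i) (U i)"
  unfolding radius_def by simp

lemma radius_Suc_le: "2 * radius (Suc i) \<le> radius i"
proof -
  have "history_radius (ch_hist x U V (Suc i)) = radius i"
    by (simp add: ch_hist_def history_radius_def radius_def)
  then show ?thesis
    unfolding radius_def[of "Suc i"] by simp
qed

lemma radius_le_power: "radius i \<le> (1/2) ^ Suc i"
proof (induction i)
  case 0
  then show ?case
    by (simp add: radius_def ch_hist_def history_radius_def)
next
  case (Suc i)
  then show ?case
    using radius_Suc_le[of i] by simp
qed

lemma eventually_radius_less: "0 < e \<Longrightarrow> \<forall>\<^sub>F i in sequentially. radius i < e"
proof -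
  assume "0 < e"
  then have "\<forall>\<^sub>F i in sequentially. (1/2::real) ^ i < e"
    by (intro order_tendstoD(2)[OF LIMSEQ_realpow_zero]) simp_all
  then show ?thesis
  proof eventually_elim
    case (elim i)
    have "radius i \<le> (1/2) ^ i / 2" "(0::real) \<le> (1/2) ^ i"
      using radius_le_power[of i] by simp_all
    then show ?case
      using elim by linarith
  qed
qed

lemma point_in_topspace: "x i \<in> topspace X"
  using ch_play_point_in_topspace[OF ch_legal_ball_strategy play] .

lemma qdist_Suc_less: "d (x i) (x (Suc i)) < radius i"
  using ch_play_point_in_answer[OF ch_legal_ball_strategy play, of i "Suc i"] answer_eq_qball[of i]
  by (simp add: qball_def)

text \<open>The radii halve, so the steps from \<open>x i\<close> on stay within the budget \<open>2 * radius i\<close>.\<close>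

lemma qdist_plus_radius_le: "i \<le> j \<Longrightarrow> d (x i) (x j) + 2 * radius j \<le> 2 * radius i"
proof (induction j rule: dec_induct)
  case (step j)
  have "d (x i) (x (Suc j)) \<le> d (x i) (x j) + d (x j) (x (Suc j))"
    using qdist_triangle point_in_topspace by blast
  then show ?case
    using qdist_Suc_less[of j] radius_Suc_le[of j] step.IH by linarith
qed (simp add: qdist_self point_in_topspace)

lemma eventually_qdist_le: "0 < e \<Longrightarrow> \<forall>\<^sub>F n in sequentially. \<forall>p\<ge>n. d (x n) (x p) \<le> e"
proof -
  assume "0 < e"
  then have "\<forall>\<^sub>F n in sequentially. radius n < e / 2"
    by (intro eventually_radius_less) simp
  then show ?thesis
  proof eventually_elim
    case (elim n)
    show ?case
    proof (intro allI impI)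
      fix p assume "n \<le> p"
      then show "d (x n) (x p) \<le> e"
        using qdist_plus_radius_le[of n p] radius_pos[of p] elim by linarith
    qed
  qed
qed

lemma play_limit:
  obtains y where "y \<in> topspace X"
    and "\<And>e. 0 < e \<Longrightarrow> \<forall>\<^sub>F n in sequentially. d (x n) y < e \<and> d y (x n) < e"
proof -
  have "\<exists>y\<in>topspace X. (\<lambda>n. max (d (x n) y) (d y (x n))) \<longlonglongrightarrow> 0"
    using complete point_in_topspace eventually_qdist_le
    unfolding qm_complete_def eventually_sequentially by (simp add: image_subset_iff)
  then obtain y where "y \<in> topspace X" and lim: "(\<lambda>n. max (d (x n) y) (d y (x n))) \<longlonglongrightarrow> 0"
    by blast
  moreover have "\<forall>\<^sub>F n in sequentially. d (x n) y < e \<and> d y (x n) < e" if "0 < e" for e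
    using order_tendstoD(2)[OF lim that] by eventually_elim simp
  ultimately show ?thesis
    using that by blast
qed

context
  fixes y :: 'a
  assumes y: "y \<in> topspace X"
    and close: "\<And>e. 0 < e \<Longrightarrow> \<forall>\<^sub>F n in sequentially. d (x n) y < e \<and> d y (x n) < e"
begin

lemma limit_in_move: "y \<in> U i"
proof -
  define \<delta> where "\<delta> = radius i - d (x i) (x (Suc i))"
  have "0 < \<delta>"
    using qdist_Suc_less[of i] by (simp add: \<delta>_def)
  then obtain j where j: "d (x j) y < \<delta>" "Suc i \<le> j"
    using eventually_happens'[OF sequentially_bot
        eventually_conj[OF close eventually_ge_at_top[of "Suc i"]]] by blast
  have "d (x i) y \<le> d (x i) (x (Suc i)) + d (x (Suc i)) y"
    using qdist_triangle point_in_topspace y by blast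
  moreover have "d (x (Suc i)) y \<le> d (x (Suc i)) (x j) + d (x j) y"
    using qdist_triangle point_in_topspace y by blast
  moreover have "d (x (Suc i)) (x j) \<le> radius i"
    using qdist_plus_radius_le[OF j(2)] radius_pos[of j] radius_Suc_le[of i] by linarith
  ultimately have "d (x i) y < inner_radius (x i) (U i)"
    using j(1) radius_le_inner_radius[of i] unfolding \<delta>_def by linarith
  then show ?thesis
    using y inner_radius(2)[OF ch_play_move(1,2)[OF ch_legal_ball_strategy play]]
    by (auto simp: qball_def)
qed

lemma answer_subset_near_limit:
  assumes "openin X W" "y \<in> W"
  shows "\<exists>i. V i \<subseteq> W"
proof -
  obtain e where e: "0 < e" "qball y e \<subseteq> W"
    using assms openin_iff_qball by blast
  have "0 < e / 2"
    using e(1) by simp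
  then obtain i where i: "d y (x i) < e / 2" "radius i < e / 2"
    using eventually_happens'[OF sequentially_bot
        eventually_conj[OF close eventually_radius_less]] by blast
  have "V i \<subseteq> qball y e"
  proof
    fix z assume "z \<in> V i"
    then have z: "z \<in> topspace X" "d (x i) z < radius i"
      by (simp_all add: answer_eq_qball qball_def)
    have "d y z \<le> d y (x i) + d (x i) z"
      using qdist_triangle y point_in_topspace z(1) by blast
    then show "z \<in> qball y e"
      using i z by (simp add: qball_def)
  qed
  then show ?thesis
    using e(2) by blast
qed

end

lemma ball_strategy_converges:
  "\<exists>y. (\<forall>i. y \<in> V i) \<and> (\<forall>W. openin X W \<and> y \<in> W \<longrightarrow> (\<exists>i. V i \<subseteq> W))"
proof -
  obtain y where "y \<in> topspace X"
    and "\<And>e. 0 < e \<Longrightarrow> \<forall>\<^sub>F n in sequentially. d (x n) y < e \<and> d y (x n) < e"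
    using play_limit by blast
  then show ?thesis
    using limit_in_move answer_subset_near_limit ch_play_move(3)[OF ch_legal_ball_strategy play]
    by blast
qed

end

lemma ball_strategy_winning_convergent: "ch_winning X ball_strategy \<and> ch_convergent X ball_strategy"
  using ch_winning_convergentI[OF ch_legal_ball_strategy ball_strategy_converges] .

end

lemma quasi_Polish_imp_convergent_strategy:
  assumes "quasi_Polish X"
  shows "\<exists>\<sigma>. ch_winning X \<sigma> \<and> ch_convergent X \<sigma>"
proof -
  obtain d where "complete_quasi_metric X d"
    using assms unfolding quasi_Polish_def complete_quasi_metric_def by blast
  then show ?thesis
    using complete_quasi_metric.ball_strategy_winning_convergent by blast
qed

section \<open>Complete families of open sequences\<close>

lemma two_half_power_less:
  fixes e :: real
  assumes "0 < e"
  shows "\<exists>M. 2 * (1/2::real) ^ M < e"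
proof -
  obtain M where "(1/2::real) ^ M < e / 2"
    using real_arch_pow_inv[of "e / 2" "1/2"] assms by auto
  then show ?thesis
    by (intro exI[of _ M]) simp
qed

locale complete_level_family =
  fixes X :: "'a topology" and W :: "nat \<Rightarrow> nat \<Rightarrow> 'a set"
  assumes openin_family: "\<And>m i. openin X (W m i)"
    and constant_base: "\<And>U x. openin X U \<Longrightarrow> x \<in> U \<Longrightarrow> \<exists>m V. W m = (\<lambda>_. V) \<and> x \<in> V \<and> V \<subseteq> U"
    and level_complete:
      "\<And>s. range s \<subseteq> topspace X \<Longrightarrow> level_cauchy W s \<Longrightarrow> \<exists>y\<in>topspace X. level_limit W s y"
begin

lemma level_le_constant_base:
  assumes "W m = (\<lambda>_. V)" "x \<in> V" "level (W m) y \<le> level (W m) x"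
  shows "y \<in> V"
  using assms level_const[of V] by (simp split: if_splits)

definition level_nbhd :: "nat \<Rightarrow> 'a \<Rightarrow> 'a set" where
  "level_nbhd K x = {y \<in> topspace X. \<forall>m<K. level (W m) y \<le> level (W m) x}"

lemma level_le_of_mem_level_nbhd: "y \<in> level_nbhd K x \<Longrightarrow> m < K \<Longrightarrow> level (W m) y \<le> level (W m) x"
  by (simp add: level_nbhd_def)

lemma openin_sublevel: "openin X {y \<in> topspace X. level (W m) y \<le> level (W m) x}"
proof (cases "level (W m) x")
  case (enat k)
  have "{y \<in> topspace X. level (W m) y \<le> level (W m) x} = (\<Union>i\<le>k. W m i)"
    using openin_subset[OF openin_family] by (auto simp: enat level_le_enat_iff)
  then show ?thesis
    using openin_family by auto
qed simp

lemma openin_level_nbhd: "openin X (level_nbhd K x)"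
proof (induction K)
  case (Suc K)
  have "level_nbhd (Suc K) x = level_nbhd K x \<inter> {y \<in> topspace X. level (W K) y \<le> level (W K) x}"
    by (auto simp: level_nbhd_def less_Suc_eq)
  then show ?case
    using Suc openin_sublevel by auto
qed (simp add: level_nbhd_def)

lemma level_nbhd_antimono: "K \<le> K' \<Longrightarrow> level_nbhd K' x \<subseteq> level_nbhd K x"
  by (auto simp: level_nbhd_def)

lemma centre_in_level_nbhd: "x \<in> topspace X \<Longrightarrow> x \<in> level_nbhd K x"
  by (simp add: level_nbhd_def)

lemma level_nbhd_subset:
  assumes "openin X U" "x \<in> U"
  shows "\<exists>K. level_nbhd K x \<subseteq> U"
proof -
  obtain m V where m: "W m = (\<lambda>_. V)" "x \<in> V" "V \<subseteq> U"
    using constant_base[OF assms] by blast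
  have "level_nbhd (Suc m) x \<subseteq> V"
    using level_le_constant_base[OF m(1,2)] by (auto simp: level_nbhd_def)
  then show ?thesis
    using m(3) by blast
qed

text \<open>If some point of \<open>U\<close> exceeds the level of \<open>x\<close> in some family, Nonempty answers with a
  level neighbourhood of \<open>x\<close> inside \<open>U\<close> that controls all families up to and including the
  first such one; this forces progress along every play.\<close>

definition answer_index :: "'a \<Rightarrow> 'a set \<Rightarrow> nat" where
  "answer_index x U = max (LEAST K. level_nbhd K x \<subseteq> U)
     (Suc (LEAST m. \<exists>u\<in>U. \<not> level (W m) u \<le> level (W m) x))"

definition stationary_answer :: "'a \<times> 'a set \<Rightarrow> 'a set" where
  "stationary_answer = (\<lambda>(x, U).
     if \<forall>m. \<forall>u\<in>U. level (W m) u \<le> level (W m) x then U else level_nbhd (answer_index x U) x)"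

lemma stationary_answer_eq_self:
  "\<forall>m. \<forall>u\<in>U. level (W m) u \<le> level (W m) x \<Longrightarrow> stationary_answer (x, U) = U"
  unfolding stationary_answer_def prod.case by (rule if_P)

lemma stationary_answer_eq_level_nbhd:
  "\<not> (\<forall>m. \<forall>u\<in>U. level (W m) u \<le> level (W m) x) \<Longrightarrow>
    stationary_answer (x, U) = level_nbhd (answer_index x U) x"
  unfolding stationary_answer_def prod.case by (rule if_not_P)

lemma level_nbhd_answer_index_subset:
  assumes "openin X U" "x \<in> U"
  shows "level_nbhd (answer_index x U) x \<subseteq> U"
proof -
  let ?K = "LEAST K. level_nbhd K x \<subseteq> U"
  have "level_nbhd ?K x \<subseteq> U"
    using level_nbhd_subset[OF assms] by (rule LeastI_ex)
  then show ?thesis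
    using level_nbhd_antimono[of ?K "answer_index x U" x] by (simp add: answer_index_def)
qed

lemma Suc_le_answer_index:
  assumes "\<not> (\<forall>m. \<forall>u\<in>U. level (W m) u \<le> level (W m) x)"
    and "\<forall>m<K. \<forall>u\<in>U. level (W m) u \<le> level (W m) x"
  shows "Suc K \<le> answer_index x U"
proof -
  let ?m = "LEAST m. \<exists>u\<in>U. \<not> level (W m) u \<le> level (W m) x"
  have "\<exists>m. \<exists>u\<in>U. \<not> level (W m) u \<le> level (W m) x"
    using assms(1) by blast
  then have "\<exists>u\<in>U. \<not> level (W ?m) u \<le> level (W ?m) x"
    by (rule LeastI_ex)
  then have "K \<le> ?m"
    using assms(2) not_less by blast
  then show ?thesis
    by (simp add: answer_index_def le_max_iff_disj)
qed

lemma stationary_answer_legal: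
  assumes "openin X U" "x \<in> U"
  shows "openin X (stationary_answer (x, U)) \<and> x \<in> stationary_answer (x, U)
    \<and> stationary_answer (x, U) \<subseteq> U"
proof (cases "\<forall>m. \<forall>u\<in>U. level (W m) u \<le> level (W m) x")
  case True
  then show ?thesis
    using assms stationary_answer_eq_self by simp
next
  case False
  have "x \<in> topspace X"
    using assms openin_subset by blast
  then show ?thesis
    using stationary_answer_eq_level_nbhd[OF False] level_nbhd_answer_index_subset[OF assms]
      openin_level_nbhd centre_in_level_nbhd by simp
qed

lemma ch_legal_stationary_answer: "ch_legal X (\<lambda>_. stationary_answer)"
  using stationary_answer_legal unfolding ch_legal_def by blast

lemma stationary_answer_subset_level_nbhd:
  assumes "openin X U" "x \<in> U" "\<forall>m<K. \<forall>u\<in>U. level (W m) u \<le> level (W m) x"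
  shows "stationary_answer (x, U) \<subseteq> level_nbhd (Suc K) x"
proof (cases "\<forall>m. \<forall>u\<in>U. level (W m) u \<le> level (W m) x")
  case True
  then show ?thesis
    using openin_subset[OF assms(1)] stationary_answer_eq_self[OF True]
    by (auto simp: level_nbhd_def)
next
  case False
  show ?thesis
    using stationary_answer_eq_level_nbhd[OF False] Suc_le_answer_index[OF False assms(3)]
      level_nbhd_antimono by simp
qed

lemma mem_stationary_answerI:
  assumes "openin X U" "x \<in> U" "y \<in> topspace X"
    and "\<And>m. \<forall>v\<in>stationary_answer (x, U). level (W m) v \<le> level (W m) x \<Longrightarrow>
      level (W m) y \<le> level (W m) x"
  shows "y \<in> stationary_answer (x, U)"
proof (cases "\<forall>m. \<forall>u\<in>U. level (W m) u \<le> level (W m) x")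
  case True
  obtain K where "level_nbhd K x \<subseteq> U"
    using level_nbhd_subset[OF assms(1,2)] by blast
  moreover have "y \<in> level_nbhd K x"
    using True assms(3,4) stationary_answer_eq_self[OF True] by (simp add: level_nbhd_def)
  ultimately show ?thesis
    using stationary_answer_eq_self[OF True] by blast
next
  case False
  let ?K = "answer_index x U"
  have K: "stationary_answer (x, U) = level_nbhd ?K x"
    by (rule stationary_answer_eq_level_nbhd[OF False])
  have "\<forall>v\<in>level_nbhd ?K x. level (W m) v \<le> level (W m) x" if "m < ?K" for m
    using that by (simp add: level_nbhd_def)
  then show ?thesis
    using assms(3,4) K by (simp add: level_nbhd_def)
qed

context
  fixes x :: "nat \<Rightarrow> 'a" and U V :: "nat \<Rightarrow> 'a set"
  assumes play: "ch_play X (\<lambda>_. stationary_answer) x U V"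
begin

lemmas play_move = ch_play_move[OF ch_legal_stationary_answer play]
lemmas play_point_in_answer = ch_play_point_in_answer[OF ch_legal_stationary_answer play]

lemma eventually_answer_subset_level_nbhd: "\<forall>\<^sub>F i in sequentially. V i \<subseteq> level_nbhd K (x i)"
proof (induction K)
  case 0
  have "V i \<subseteq> level_nbhd 0 (x i)" for i
    using ch_play_answer(3)[OF ch_legal_stationary_answer play] openin_subset[OF play_move(1)]
    by (auto simp: level_nbhd_def)
  then show ?case
    by (simp add: always_eventually)
next
  case (Suc K)
  have "\<exists>c. \<forall>\<^sub>F i in sequentially. level (W m) (x i) = c" if "m < K" for m
  proof (rule eventually_const_if_eventually_antimono)
    show "\<forall>\<^sub>F k in sequentially. \<forall>p\<ge>k. level (W m) (x p) \<le> level (W m) (x k)"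
      using Suc.IH
    proof eventually_elim
      case (elim k)
      then show ?case
        using play_point_in_answer that by (auto simp: level_nbhd_def)
    qed
  qed
  then obtain c where "\<forall>m<K. \<forall>\<^sub>F i in sequentially. level (W m) (x i) = c m"
    by metis
  then have "\<forall>\<^sub>F i in sequentially. \<forall>m\<in>{..<K}. level (W m) (x i) = c m"
    by (intro eventually_ball_finite) auto
  define P where "P i \<longleftrightarrow> V i \<subseteq> level_nbhd K (x i) \<and> (\<forall>m\<in>{..<K}. level (W m) (x i) = c m)" for i
  have "\<forall>\<^sub>F i in sequentially. P i"
    using Suc.IH \<open>\<forall>\<^sub>F i in sequentially. \<forall>m\<in>{..<K}. _\<close> unfolding P_def by eventually_elim blast
  then have "\<forall>\<^sub>F i in sequentially. P i \<and> P (Suc i)"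
    using eventually_sequentially_Suc[of P] by (auto intro: eventually_conj)
  then have "\<forall>\<^sub>F i in sequentially. V (Suc i) \<subseteq> level_nbhd (Suc K) (x (Suc i))"
  proof eventually_elim
    case (elim i)
    then have "\<forall>m<K. \<forall>u\<in>U (Suc i). level (W m) u \<le> level (W m) (x (Suc i))"
      using play_move(3)[of i] by (auto simp: P_def level_nbhd_def)
    then show ?case
      using stationary_answer_subset_level_nbhd[OF play_move(1,2)] play_move(4) by simp
  qed
  then show ?case
    by (rule eventually_sequentially_Suc[THEN iffD1])
qed

lemma level_cauchy_play: "level_cauchy W x"
  unfolding level_cauchy_def
proof
  fix m
  show "\<forall>\<^sub>F k in sequentially. \<forall>p\<ge>k. level (W m) (x p) \<le> level (W m) (x k)"
    using eventually_answer_subset_level_nbhd[of "Suc m"]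
  proof eventually_elim
    case (elim k)
    then show ?case
      using play_point_in_answer by (auto simp: level_nbhd_def)
  qed
qed

lemma stationary_answer_converges:
  "\<exists>y. (\<forall>i. y \<in> V i) \<and> (\<forall>Z. openin X Z \<and> y \<in> Z \<longrightarrow> (\<exists>i. V i \<subseteq> Z))"
proof -
  obtain y where y: "y \<in> topspace X" and lim: "level_limit W x y"
    using level_complete[OF _ level_cauchy_play] ch_play_point_in_topspace[OF ch_legal_stationary_answer play]
    by blast
  have "y \<in> V i" for i
    unfolding play_move(4)
  proof (rule mem_stationary_answerI[OF play_move(1,2) y])
    fix m
    assume below: "\<forall>v\<in>stationary_answer (x i, U i). level (W m) v \<le> level (W m) (x i)"
    obtain k where "i \<le> k" "level (W m) (x k) = level (W m) y"
      using eventually_happens'[OF sequentially_bot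
          eventually_conj[OF eventually_ge_at_top lim[unfolded level_limit_def, rule_format]]] by blast
    moreover have "x k \<in> stationary_answer (x i, U i)"
      using play_point_in_answer[OF \<open>i \<le> k\<close>] play_move(4)[of i] by simp
    ultimately show "level (W m) y \<le> level (W m) (x i)"
      using below by auto
  qed
  moreover have "\<exists>i. V i \<subseteq> Z" if Z: "openin X Z" "y \<in> Z" for Z
  proof -
    obtain m B where m: "W m = (\<lambda>_. B)" "y \<in> B" "B \<subseteq> Z"
      using constant_base[OF Z] by blast
    obtain i where i: "V i \<subseteq> level_nbhd (Suc m) (x i)" "level (W m) (x i) = level (W m) y"
      using eventually_happens'[OF sequentially_bot eventually_conj[OF
          eventually_answer_subset_level_nbhd lim[unfolded level_limit_def, rule_format]]] by blast
    have "V i \<subseteq> B"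
    proof
      fix z assume "z \<in> V i"
      then have "z \<in> level_nbhd (Suc m) (x i)"
        using i(1) by blast
      then have "level (W m) z \<le> level (W m) (x i)"
        using level_le_of_mem_level_nbhd by blast
      then have "level (W m) z \<le> level (W m) y"
        using i(2) by simp
      then show "z \<in> B"
        by (rule level_le_constant_base[OF m(1,2)])
    qed
    then show ?thesis
      using m(3) by blast
  qed
  ultimately show ?thesis
    by blast
qed

end

theorem stationary_convergent_strategy:
  "ch_winning X (\<lambda>_. stationary_answer) \<and> ch_stationary (\<lambda>_. stationary_answer)
    \<and> ch_convergent X (\<lambda>_. stationary_answer)"
proof -
  have "ch_winning X (\<lambda>_. stationary_answer) \<and> ch_convergent X (\<lambda>_. stationary_answer)"
    by (rule ch_winning_convergentI[OF ch_legal_stationary_answer]) (rule stationary_answer_converges)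
  then show ?thesis
    unfolding ch_stationary_def by blast
qed

definition level_qdist :: "'a \<Rightarrow> 'a \<Rightarrow> real" where
  "level_qdist x y = (\<Sum>m. (1/2) ^ m * of_bool (level (W m) x < level (W m) y))"

lemma summable_level_qdist: "summable (\<lambda>m. (1/2::real) ^ m * of_bool (level (W m) x < level (W m) y))"
  by (rule summable_comparison_test'[of "\<lambda>m. (1/2::real) ^ m" 0]) auto

lemma level_qdist_nonneg: "0 \<le> level_qdist x y"
  unfolding level_qdist_def by (rule suminf_nonneg[OF summable_level_qdist]) simp

lemma level_qdist_self: "level_qdist x x = 0"
  by (simp add: level_qdist_def)

lemma level_qdist_triangle: "level_qdist x z \<le> level_qdist x y + level_qdist y z"
proof -
  have "level_qdist x z \<le> (\<Sum>m. (1/2) ^ m * of_bool (level (W m) x < level (W m) y)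
      + (1/2) ^ m * of_bool (level (W m) y < level (W m) z))"
    unfolding level_qdist_def
    by (rule suminf_le[OF _ summable_level_qdist summable_add[OF summable_level_qdist summable_level_qdist]])
      (auto simp: distrib_left[symmetric])
  also have "\<dots> = level_qdist x y + level_qdist y z"
    unfolding level_qdist_def by (rule suminf_add[OF summable_level_qdist summable_level_qdist, symmetric])
  finally show ?thesis .
qed

lemma level_le_if_level_qdist_less:
  assumes "level_qdist x y < (1/2) ^ m"
  shows "level (W m) y \<le> level (W m) x"
proof (rule ccontr)
  assume "\<not> level (W m) y \<le> level (W m) x"
  then have "(\<Sum>i\<in>{m}. (1/2::real) ^ i * of_bool (level (W i) x < level (W i) y)) \<le> level_qdist x y"
    unfolding level_qdist_def by (intro sum_le_suminf[OF summable_level_qdist]) auto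
  with assms \<open>\<not> level (W m) y \<le> level (W m) x\<close> show False
    by (simp add: not_le)
qed

lemma level_qdist_le_if_level_le:
  assumes "\<forall>m<M. level (W m) y \<le> level (W m) x"
  shows "level_qdist x y \<le> 2 * (1/2) ^ M"
proof -
  let ?f = "\<lambda>m. (1/2::real) ^ m * of_bool (level (W m) x < level (W m) y)"
  have "level_qdist x y = (\<Sum>n. ?f (n + M)) + (\<Sum>i<M. ?f i)"
    unfolding level_qdist_def by (rule suminf_split_initial_segment[OF summable_level_qdist])
  also have "(\<Sum>i<M. ?f i) = 0"
    using assms by (intro sum.neutral) (auto simp: not_less[symmetric])
  also have "(\<Sum>n. ?f (n + M)) \<le> (\<Sum>n. (1/2) ^ M * (1/2::real) ^ n)"
    by (intro suminf_le summable_ignore_initial_segment[OF summable_level_qdist] summable_mult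
        summable_geometric) (simp_all add: power_add mult.commute)
  also have "\<dots> = 2 * (1/2) ^ M"
    using suminf_mult[of "\<lambda>n. (1/2::real) ^ n" "(1/2) ^ M"] suminf_geometric[of "1/2::real"] by simp
  finally show ?thesis
    by simp
qed

lemma level_qdist_separates:
  assumes "t0_space X" "x \<in> topspace X" "y \<in> topspace X"
    and "level_qdist x y = 0" "level_qdist y x = 0"
  shows "x = y"
proof (rule ccontr)
  assume "x \<noteq> y"
  then obtain Z where Z: "openin X Z" "x \<notin> Z \<longleftrightarrow> y \<in> Z"
    using assms(1-3) unfolding t0_space_def by blast
  have "x \<in> B \<longleftrightarrow> y \<in> B" if "W m = (\<lambda>_. B)" for m B
    using level_le_if_level_qdist_less[of x y m] level_le_if_level_qdist_less[of y x m] assms(4,5)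
      level_le_constant_base[OF that] by auto
  moreover obtain m B where "W m = (\<lambda>_. B)" "x \<in> B \<or> y \<in> B" "B \<subseteq> Z"
    using constant_base[OF Z(1)] Z(2) by (metis (no_types, lifting))
  ultimately show False
    using Z(2) by blast
qed

lemma qm_induces_level_qdist: "qm_induces X level_qdist"
  unfolding qm_induces_def
proof (intro allI iffI conjI ballI)
  fix Z x assume "openin X Z" "x \<in> Z"
  then obtain m B where m: "W m = (\<lambda>_. B)" "x \<in> B" "B \<subseteq> Z"
    using constant_base by blast
  show "\<exists>e>0. \<forall>y\<in>topspace X. level_qdist x y < e \<longrightarrow> y \<in> Z"
    using level_le_if_level_qdist_less level_le_constant_base[OF m(1,2)] m(3)
    by (intro exI[of _ "(1/2) ^ m"]) auto
next
  fix Z assume "openin X Z"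
  then show "Z \<subseteq> topspace X"
    by (rule openin_subset)
next
  fix Z assume Z: "Z \<subseteq> topspace X \<and> (\<forall>x\<in>Z. \<exists>e>0. \<forall>y\<in>topspace X. level_qdist x y < e \<longrightarrow> y \<in> Z)"
  show "openin X Z"
  proof (subst openin_subopen, intro ballI)
    fix x assume x: "x \<in> Z"
    obtain e where e: "0 < e" "\<forall>y\<in>topspace X. level_qdist x y < e \<longrightarrow> y \<in> Z"
      using Z x by blast
    obtain M where M: "2 * (1/2::real) ^ M < e"
      using two_half_power_less[OF e(1)] by blast
    have "level_nbhd M x \<subseteq> Z"
    proof
      fix y assume "y \<in> level_nbhd M x"
      then have y: "y \<in> topspace X" "\<forall>m<M. level (W m) y \<le> level (W m) x"
        by (simp_all add: level_nbhd_def)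
      then have "level_qdist x y < e"
        using level_qdist_le_if_level_le[OF y(2)] M by linarith
      then show "y \<in> Z"
        using e(2) y(1) by blast
    qed
    moreover have "x \<in> level_nbhd M x"
      using x Z centre_in_level_nbhd by blast
    ultimately show "\<exists>T. openin X T \<and> x \<in> T \<and> T \<subseteq> Z"
      using openin_level_nbhd by blast
  qed
qed

lemma level_cauchy_if_level_qdist_cauchy:
  assumes cauchy: "\<forall>e>0. \<exists>N. \<forall>n\<ge>N. \<forall>p\<ge>n. level_qdist (s n) (s p) \<le> e"
  shows "level_cauchy W s"
  unfolding level_cauchy_def eventually_sequentially
proof
  fix m
  have pos: "0 < (1/2::real) ^ m / 2"
    by simp
  then obtain N where N: "\<forall>n\<ge>N. \<forall>p\<ge>n. level_qdist (s n) (s p) \<le> (1/2) ^ m / 2"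
    using cauchy by blast
  have "level_qdist (s n) (s p) < (1/2) ^ m" if "N \<le> n" "n \<le> p" for n p
  proof -
    have "level_qdist (s n) (s p) \<le> (1/2) ^ m / 2"
      using N that by blast
    then show ?thesis
      using pos by linarith
  qed
  then show "\<exists>N. \<forall>k\<ge>N. \<forall>p\<ge>k. level (W m) (s p) \<le> level (W m) (s k)"
    using level_le_if_level_qdist_less by blast
qed

lemma level_qdist_tendsto_zero_if_level_limit:
  assumes lim: "level_limit W s y"
  shows "(\<lambda>n. max (level_qdist (s n) y) (level_qdist y (s n))) \<longlonglongrightarrow> 0"
proof (rule LIMSEQ_I)
  fix r :: real assume "0 < r"
  then obtain M where M: "2 * (1/2::real) ^ M < r"
    using two_half_power_less by blast
  have "\<forall>\<^sub>F k in sequentially. \<forall>m\<in>{..<M}. level (W m) (s k) = level (W m) y"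
    using lim unfolding level_limit_def by (intro eventually_ball_finite) auto
  then have "\<forall>\<^sub>F k in sequentially. norm (max (level_qdist (s k) y) (level_qdist y (s k)) - 0) < r"
  proof eventually_elim
    case (elim k)
    then have "level_qdist (s k) y \<le> 2 * (1/2) ^ M" "level_qdist y (s k) \<le> 2 * (1/2) ^ M"
      by (auto intro!: level_qdist_le_if_level_le)
    then show ?case
      using M level_qdist_nonneg[of "s k" y] by simp
  qed
  then show "\<exists>no. \<forall>n\<ge>no. norm (max (level_qdist (s n) y) (level_qdist y (s n)) - 0) < r"
    unfolding eventually_sequentially .
qed

lemma qm_complete_level_qdist: "qm_complete (topspace X) level_qdist"
  unfolding qm_complete_def
proof (intro allI impI)
  fix s :: "nat \<Rightarrow> 'a"
  assume "range s \<subseteq> topspace X" "\<forall>e>0. \<exists>N. \<forall>n\<ge>N. \<forall>p\<ge>n. level_qdist (s n) (s p) \<le> e"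
  then obtain y where "y \<in> topspace X" "level_limit W s y"
    using level_complete level_cauchy_if_level_qdist_cauchy by blast
  then show "\<exists>y\<in>topspace X. (\<lambda>n. max (level_qdist (s n) y) (level_qdist y (s n))) \<longlonglongrightarrow> 0"
    using level_qdist_tendsto_zero_if_level_limit by blast
qed

theorem quasi_Polish:
  assumes "t0_space X" "second_countable X"
  shows "quasi_Polish X"
proof -
  have "quasi_metric_on (topspace X) level_qdist"
    unfolding quasi_metric_on_def
    using level_qdist_nonneg level_qdist_self level_qdist_triangle level_qdist_separates[OF assms(1)]
    by blast
  then show ?thesis
    unfolding quasi_Polish_def
    using assms(2) qm_induces_level_qdist qm_complete_level_qdist by blast
qed

end

section \<open>Convergent winning strategies give complete families\<close>

locale convergent_winning_strategy =
  fixes X :: "'a topology" and \<sigma> :: "'a ch_strategy" and B :: "nat \<Rightarrow> 'a set"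
  assumes winning: "ch_winning X \<sigma>"
    and convergent: "ch_convergent X \<sigma>"
    and openin_base: "\<And>n. openin X (B n)"
    and base: "\<And>U x. openin X U \<Longrightarrow> x \<in> U \<Longrightarrow> \<exists>n. x \<in> B n \<and> B n \<subseteq> U"
begin

text \<open>A position codes a partial play by pairs \<open>(a, b)\<close> of base indices: Empty played \<open>B a\<close>
  at a point whose answer contains \<open>B b\<close>, and Empty's next move has to lie inside \<open>B b\<close>.\<close>

definition witness_point :: "'a ch_history \<Rightarrow> nat \<times> nat \<Rightarrow> 'a" where
  "witness_point h c = (SOME z. z \<in> B (fst c) \<and> B (snd c) \<subseteq> \<sigma> h (z, B (fst c)))"

definition round_of :: "'a ch_history \<Rightarrow> nat \<times> nat \<Rightarrow> ('a \<times> 'a set) \<times> 'a set" where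
  "round_of h c = ((witness_point h c, B (fst c)), \<sigma> h (witness_point h c, B (fst c)))"

definition position_history :: "(nat \<times> nat) list \<Rightarrow> 'a ch_history" where
  "position_history p = foldl (\<lambda>h c. h @ [round_of h c]) [] p"

definition position_set :: "(nat \<times> nat) list \<Rightarrow> 'a set" where
  "position_set p = (if p = [] then topspace X else B (snd (last p)))"

definition admissible :: "(nat \<times> nat) list \<Rightarrow> nat \<times> nat \<Rightarrow> bool" where
  "admissible p c \<longleftrightarrow> B (fst c) \<subseteq> position_set p \<and>
     (\<exists>z\<in>B (fst c). B (snd c) \<subseteq> \<sigma> (position_history p) (z, B (fst c)))"

inductive valid_position :: "(nat \<times> nat) list \<Rightarrow> bool" where
  Nil: "valid_position []"
| snoc: "valid_position p \<Longrightarrow> admissible p c \<Longrightarrow> valid_position (p @ [c])"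

lemma valid_position_snoc_iff: "valid_position (p @ [c]) \<longleftrightarrow> valid_position p \<and> admissible p c"
proof
  assume "valid_position (p @ [c])"
  then show "valid_position p \<and> admissible p c"
    by (cases rule: valid_position.cases) auto
qed (simp add: valid_position.snoc)

lemma position_history_snoc:
  "position_history (p @ [c]) = position_history p @ [round_of (position_history p) c]"
  by (simp add: position_history_def)

lemma position_set_snoc: "position_set (p @ [c]) = B (snd c)"
  by (simp add: position_set_def)

lemma openin_position_set: "openin X (position_set p)"
  by (simp add: position_set_def openin_base)

lemma witness_point:
  assumes "admissible p c"
  shows "witness_point (position_history p) c \<in> B (fst c)"
    and "B (snd c) \<subseteq> \<sigma> (position_history p) (witness_point (position_history p) c, B (fst c))"
proof -
  have "\<exists>z. z \<in> B (fst c) \<and> B (snd c) \<subseteq> \<sigma> (position_history p) (z, B (fst c))"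
    using assms unfolding admissible_def by blast
  from someI_ex[OF this]
  show "witness_point (position_history p) c \<in> B (fst c)"
    "B (snd c) \<subseteq> \<sigma> (position_history p) (witness_point (position_history p) c, B (fst c))"
    unfolding witness_point_def by blast+
qed

lemma partial_play_of_position:
  assumes "valid_position p" "openin X W" "z \<in> W" "W \<subseteq> position_set p"
  shows "\<exists>x U V. ch_partial_play X \<sigma> x U V (length p) \<and> ch_hist x U V (length p) = position_history p
           \<and> x (length p) = z \<and> U (length p) = W"
  using assms
proof (induction p arbitrary: z W rule: valid_position.induct)
  case Nil
  have "ch_partial_play X \<sigma> (\<lambda>_. z) (\<lambda>_. W) (\<lambda>_. {}) 0"
    using Nil unfolding ch_partial_play_def ch_empty_ok_def by simp
  then show ?case
    by (force simp: ch_hist_def position_history_def)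
next
  case (snoc p c)
  let ?h = "position_history p" and ?z = "witness_point (position_history p) c"
  let ?v = "\<sigma> ?h (?z, B (fst c))"
  have "B (fst c) \<subseteq> position_set p"
    using snoc.hyps(2) unfolding admissible_def by blast
  then obtain x U V where IH: "ch_partial_play X \<sigma> x U V (length p)" "ch_hist x U V (length p) = ?h"
      "x (length p) = ?z" "U (length p) = B (fst c)"
    using snoc.IH[OF openin_base witness_point(1)[OF snoc.hyps(2)]] by blast
  have "W \<subseteq> ?v"
    using snoc.prems(3) witness_point(2)[OF snoc.hyps(2)] by (simp add: position_set_snoc)
  then have "ch_partial_play X \<sigma> (x(Suc (length p) := z)) (U(Suc (length p) := W))
      (V(length p := ?v)) (Suc (length p))"
    using ch_partial_play_snoc[OF IH(1) snoc.prems(1,2)] IH(2-4) by simp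
  moreover have "ch_hist (x(Suc (length p) := z)) (U(Suc (length p) := W)) (V(length p := ?v))
      (Suc (length p)) = position_history (p @ [c])"
    using IH(2-4) by (simp add: ch_hist_snoc_upd position_history_snoc round_of_def)
  moreover have "(x(Suc (length p) := z)) (Suc (length p)) = z" "(U(Suc (length p) := W)) (Suc (length p)) = W"
    by simp_all
  ultimately show ?case
    unfolding length_append_singleton by blast
qed

lemma answer_at_position:
  assumes "valid_position p" "openin X W" "z \<in> W" "W \<subseteq> position_set p"
  shows "openin X (\<sigma> (position_history p) (z, W)) \<and> z \<in> \<sigma> (position_history p) (z, W)
    \<and> \<sigma> (position_history p) (z, W) \<subseteq> W"
proof -
  obtain x U V where "ch_partial_play X \<sigma> x U V (length p)" "ch_hist x U V (length p) = position_history p"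
      "x (length p) = z" "U (length p) = W"
    using partial_play_of_position[OF assms] by blast
  then show ?thesis
    using winning unfolding ch_winning_def by metis
qed

lemma admissible_move:
  assumes "valid_position p" "z \<in> position_set p" "openin X Z" "z \<in> Z"
  shows "\<exists>a b. admissible p (a, b) \<and> z \<in> B b \<and> B b \<subseteq> Z"
proof -
  obtain a where a: "z \<in> B a" "B a \<subseteq> position_set p"
    using base[OF openin_position_set assms(2)] by blast
  let ?V = "\<sigma> (position_history p) (z, B a)"
  have V: "openin X ?V" "z \<in> ?V" "?V \<subseteq> B a"
    using answer_at_position[OF assms(1) openin_base a] by blast+
  then obtain b where b: "z \<in> B b" "B b \<subseteq> ?V \<inter> Z"
    using base[of "?V \<inter> Z" z] assms(3,4) by blast
  then have "admissible p (a, b)"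
    unfolding admissible_def using a by auto
  then show ?thesis
    using b by blast
qed

definition move_family :: "bool \<Rightarrow> (nat \<times> nat) list \<Rightarrow> nat \<Rightarrow> 'a set" where
  "move_family r p i =
     (if valid_position p \<and> admissible p (prod_decode i) \<and> (r \<longrightarrow> B (snd (prod_decode i)) \<subseteq> B (length p))
      then B (snd (prod_decode i)) else {})"

lemma mem_move_family_iff:
  "z \<in> move_family r p i \<longleftrightarrow> valid_position p \<and> admissible p (prod_decode i)
     \<and> (r \<longrightarrow> B (snd (prod_decode i)) \<subseteq> B (length p)) \<and> z \<in> B (snd (prod_decode i))"
  by (simp add: move_family_def)

lemma position_set_subset_move_family:
  assumes "valid_position p"
  shows "position_set p \<subseteq> (\<Union>i. move_family False p i)"
    and "position_set p \<inter> B (length p) \<subseteq> (\<Union>i. move_family True p i)"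
proof -
  have cover: "z \<in> (\<Union>i. move_family r p i)"
    if z: "z \<in> position_set p" "openin X Z" "z \<in> Z" "r \<longrightarrow> Z \<subseteq> B (length p)" for z Z r
  proof -
    obtain a b where "admissible p (a, b)" "z \<in> B b" "B b \<subseteq> Z"
      using admissible_move[OF assms z(1-3)] by blast
    then have "z \<in> move_family r p (prod_encode (a, b))"
      using assms z(4) unfolding mem_move_family_iff by auto
    then show ?thesis
      by blast
  qed
  show "position_set p \<subseteq> (\<Union>i. move_family False p i)"
  proof
    fix z assume "z \<in> position_set p"
    then show "z \<in> (\<Union>i. move_family False p i)"
      using cover[of z "topspace X" False] openin_subset[OF openin_position_set] by blast
  qed
  show "position_set p \<inter> B (length p) \<subseteq> (\<Union>i. move_family True p i)"
  proof
    fix z assume "z \<in> position_set p \<inter> B (length p)"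
    then show "z \<in> (\<Union>i. move_family True p i)"
      using cover[of z "B (length p)" True] openin_base by blast
  qed
qed

definition tree_family :: "nat + bool \<times> (nat \<times> nat) list \<Rightarrow> nat \<Rightarrow> 'a set" where
  "tree_family j = (case j of Inl n \<Rightarrow> (\<lambda>_. B n) | Inr (r, p) \<Rightarrow> move_family r p)"

lemma tree_family_simps [simp]:
  "tree_family (Inl n) = (\<lambda>_. B n)" "tree_family (Inr (r, p)) = move_family r p"
  by (simp_all add: tree_family_def)

lemma move_family_cases: "move_family r p i = {} \<or> move_family r p i = B (snd (prod_decode i))"
  by (simp add: move_family_def)

lemma tree_family_cases: "tree_family j i = {} \<or> (\<exists>n. tree_family j i = B n)"
proof (cases j)
  case (Inr rp)
  then show ?thesis
    using move_family_cases[of "fst rp" "snd rp" i] by (cases rp) auto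
qed auto

lemma openin_tree_family: "openin X (tree_family j i)"
  using tree_family_cases[of j i] openin_base by auto

text \<open>Given a level-Cauchy sequence \<open>s\<close>, we descend through valid positions whose position sets
  eventually contain \<open>s\<close>, refining into \<open>B k\<close> at depth \<open>k\<close> whenever \<open>s\<close> is eventually in
  \<open>B k\<close>. The resulting play follows \<open>\<sigma>\<close>, and the point it converges to is a level limit of \<open>s\<close>.\<close>

context
  fixes s :: "nat \<Rightarrow> 'a"
  assumes s_top: "range s \<subseteq> topspace X" and s_cauchy: "level_cauchy tree_family s"
begin

lemma eventually_mem_tree_family:
  "\<forall>\<^sub>F k in sequentially. s k \<in> (\<Union>i. tree_family j i) \<Longrightarrow>
    \<exists>i. \<forall>\<^sub>F k in sequentially. s k \<in> tree_family j i"
  using eventually_mem_if_eventually_antimono_level s_cauchy unfolding level_cauchy_def by blast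

definition refinable :: "(nat \<times> nat) list \<Rightarrow> bool" where
  "refinable p \<longleftrightarrow> (\<exists>i. \<forall>\<^sub>F k in sequentially. s k \<in> move_family True p i)"

definition next_move :: "(nat \<times> nat) list \<Rightarrow> nat \<times> nat" where
  "next_move p = prod_decode (SOME i. \<forall>\<^sub>F k in sequentially. s k \<in> move_family (refinable p) p i)"

lemma next_move_invariant:
  assumes "valid_position p" "\<forall>\<^sub>F k in sequentially. s k \<in> position_set p"
  shows "valid_position (p @ [next_move p])"
    and "\<forall>\<^sub>F k in sequentially. s k \<in> position_set (p @ [next_move p])"
    and "refinable p \<Longrightarrow> B (snd (next_move p)) \<subseteq> B (length p)"
proof -
  have "\<exists>i. \<forall>\<^sub>F k in sequentially. s k \<in> move_family (refinable p) p i"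
  proof (cases "refinable p")
    case False
    have "\<forall>\<^sub>F k in sequentially. s k \<in> (\<Union>i. move_family False p i)"
      using assms(2) by (rule eventually_mono) (use position_set_subset_move_family(1)[OF assms(1)] in blast)
    then show ?thesis
      using eventually_mem_tree_family[of "Inr (False, p)"] False by simp
  qed (simp add: refinable_def)
  then have "\<forall>\<^sub>F k in sequentially.
      s k \<in> move_family (refinable p) p (SOME i. \<forall>\<^sub>F k in sequentially. s k \<in> move_family (refinable p) p i)"
    by (rule someI_ex)
  then have ev: "\<forall>\<^sub>F k in sequentially. s k \<in> move_family (refinable p) p (prod_encode (next_move p))"
    by (simp add: next_move_def)
  then obtain k where "s k \<in> move_family (refinable p) p (prod_encode (next_move p))"
    using eventually_happens'[OF sequentially_bot] by blast
  then have "admissible p (next_move p)" "refinable p \<longrightarrow> B (snd (next_move p)) \<subseteq> B (length p)"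
    by (simp_all add: mem_move_family_iff)
  then show "valid_position (p @ [next_move p])" "refinable p \<Longrightarrow> B (snd (next_move p)) \<subseteq> B (length p)"
    using assms(1) valid_position.snoc by simp_all
  show "\<forall>\<^sub>F k in sequentially. s k \<in> position_set (p @ [next_move p])"
    using ev by eventually_elim (simp add: mem_move_family_iff position_set_snoc)
qed

fun path :: "nat \<Rightarrow> (nat \<times> nat) list" where
  "path 0 = []"
| "path (Suc k) = path k @ [next_move (path k)]"

lemma length_path: "length (path k) = k"
  by (induction k) simp_all

lemma path_invariant: "valid_position (path k) \<and> (\<forall>\<^sub>F n in sequentially. s n \<in> position_set (path k))"
proof (induction k)
  case 0
  have "\<forall>\<^sub>F n in sequentially. s n \<in> topspace X"
    using s_top by (intro always_eventually) blast
  then show ?case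
    by (simp add: valid_position.Nil position_set_def)
next
  case (Suc k)
  then have "valid_position (path k)" "\<forall>\<^sub>F n in sequentially. s n \<in> position_set (path k)"
    by blast+
  from next_move_invariant(1,2)[OF this] show ?case
    by simp
qed

lemma refinable_path:
  assumes "\<forall>\<^sub>F n in sequentially. s n \<in> B k"
  shows "refinable (path k)"
proof -
  have "position_set (path k) \<inter> B k \<subseteq> (\<Union>i. move_family True (path k) i)"
    using position_set_subset_move_family(2)[OF conjunct1[OF path_invariant[of k]]]
    by (simp add: length_path)
  then have "\<forall>\<^sub>F n in sequentially. s n \<in> (\<Union>i. tree_family (Inr (True, path k)) i)"
    using eventually_conj[OF conjunct2[OF path_invariant[of k]] assms] by (auto elim!: eventually_mono)
  then show ?thesis
    using eventually_mem_tree_family[of "Inr (True, path k)"] unfolding refinable_def by simp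
qed

definition path_round :: "nat \<Rightarrow> ('a \<times> 'a set) \<times> 'a set" where
  "path_round i = round_of (position_history (path i)) (next_move (path i))"

definition path_point :: "nat \<Rightarrow> 'a" where "path_point i = fst (fst (path_round i))"
definition path_move :: "nat \<Rightarrow> 'a set" where "path_move i = snd (fst (path_round i))"
definition path_answer :: "nat \<Rightarrow> 'a set" where "path_answer i = snd (path_round i)"

lemma admissible_next_move: "admissible (path i) (next_move (path i))"
  using conjunct1[OF path_invariant[of "Suc i"]] by (simp only: path.simps(2) valid_position_snoc_iff)

lemma ch_hist_path: "ch_hist path_point path_move path_answer i = position_history (path i)"
proof (induction i)
  case (Suc i)
  then show ?case
    by (simp add: ch_hist_Suc position_history_snoc path_point_def path_move_def path_answer_def
        path_round_def)
qed (simp add: ch_hist_def position_history_def)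

lemma path_answer_eq:
  "path_answer i = \<sigma> (ch_hist path_point path_move path_answer i) (path_point i, path_move i)"
  by (simp add: ch_hist_path path_point_def path_move_def path_answer_def path_round_def round_of_def)

lemma path_play: "ch_play X \<sigma> path_point path_move path_answer"
  unfolding ch_play_def ch_empty_ok_def
proof (intro allI conjI impI)
  fix i
  note adm = admissible_next_move[of i]
  show "openin X (path_move i)"
    by (simp add: path_move_def path_round_def round_of_def openin_base)
  show "path_point i \<in> path_move i"
    using witness_point(1)[OF adm] by (simp add: path_point_def path_move_def path_round_def round_of_def)
  show "path_answer i = \<sigma> (ch_hist path_point path_move path_answer i) (path_point i, path_move i)"
    by (rule path_answer_eq)
  assume "0 < i"
  then obtain j where j: "i = Suc j"
    using gr0_implies_Suc by blast
  note adm_j = admissible_next_move[of j]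
  have "path_move i \<subseteq> position_set (path i)"
    using adm unfolding admissible_def by (simp add: path_move_def path_round_def round_of_def)
  also have "\<dots> = B (snd (next_move (path j)))"
    by (simp add: j position_set_snoc)
  also have "\<dots> \<subseteq> path_answer j"
    using witness_point(2)[OF adm_j] by (simp add: path_answer_def path_round_def round_of_def)
  finally show "path_move i \<subseteq> path_answer (i - 1)"
    by (simp add: j)
qed

lemma path_answer_subset: "path_answer (Suc i) \<subseteq> B (snd (next_move (path i)))"
proof -
  have "path_answer (Suc i) \<subseteq> path_move (Suc i)"
    using winning ch_partial_play_if_play[OF path_play] path_answer_eq[of "Suc i"]
    unfolding ch_winning_def by blast
  also have "\<dots> \<subseteq> position_set (path (Suc i))"
    using admissible_next_move[of "Suc i"]
    unfolding admissible_def path_move_def path_round_def round_of_def by simp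
  finally show ?thesis
    by (simp add: position_set_snoc)
qed

lemma eventually_in_base_iff_limit:
  assumes y: "y \<in> (\<Inter>i. path_answer i)"
    and nbhds: "\<forall>Z. openin X Z \<and> y \<in> Z \<longrightarrow> (\<exists>i. path_answer i \<subseteq> Z)"
  shows "(\<forall>\<^sub>F n in sequentially. s n \<in> B k) \<longleftrightarrow> y \<in> B k"
proof
  assume "\<forall>\<^sub>F n in sequentially. s n \<in> B k"
  then have "B (snd (next_move (path k))) \<subseteq> B k"
    using next_move_invariant(3)[OF conjunct1[OF path_invariant] conjunct2[OF path_invariant]
        refinable_path]
    by (simp add: length_path)
  then show "y \<in> B k"
    using y path_answer_subset[of k] by blast
next
  assume "y \<in> B k"
  then obtain i where i: "path_answer i \<subseteq> B k"
    using nbhds openin_base by blast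
  have "B (snd (next_move (path i))) \<subseteq> path_answer i"
    using witness_point(2)[OF admissible_next_move[of i]]
    by (simp add: path_answer_def path_round_def round_of_def)
  with i have sub: "B (snd (next_move (path i))) \<subseteq> B k"
    by blast
  have "\<forall>\<^sub>F n in sequentially. s n \<in> B (snd (next_move (path i)))"
    using conjunct2[OF path_invariant[of "Suc i"]] by (simp add: position_set_snoc)
  then show "\<forall>\<^sub>F n in sequentially. s n \<in> B k"
    by (rule eventually_mono) (use sub in blast)
qed

lemma level_limit_tree_familyI:
  assumes base_iff: "\<And>k. (\<forall>\<^sub>F n in sequentially. s n \<in> B k) \<longleftrightarrow> y \<in> B k"
  shows "level_limit tree_family s y"
  unfolding level_limit_def
proof
  fix j
  have family_iff: "(\<forall>\<^sub>F n in sequentially. s n \<in> tree_family j i) \<longleftrightarrow> y \<in> tree_family j i" for i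
  proof (cases "tree_family j i = {}")
    case False
    then obtain n where "tree_family j i = B n"
      using tree_family_cases by blast
    then show ?thesis
      using base_iff[of n] by simp
  qed simp
  show "\<forall>\<^sub>F k in sequentially. level (tree_family j) (s k) = level (tree_family j) y"
    using s_cauchy unfolding level_cauchy_def
    by (intro eventually_level_eq_if_eventually_antimono_level family_iff) blast
qed

lemma level_limit_tree_family: "\<exists>y\<in>topspace X. level_limit tree_family s y"
proof -
  obtain y where y: "y \<in> (\<Inter>i. path_answer i)"
    and nbhds: "\<forall>Z. openin X Z \<and> y \<in> Z \<longrightarrow> (\<exists>i. path_answer i \<subseteq> Z)"
    using convergent path_play unfolding ch_convergent_def by blast
  have "y \<in> topspace X"
    using y path_answer_subset[of 0] openin_subset[OF openin_base] by blast
  moreover have "level_limit tree_family s y"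
    by (rule level_limit_tree_familyI) (rule eventually_in_base_iff_limit[OF y nbhds])
  ultimately show ?thesis
    by blast
qed

end

end

lemma second_countable_nat_base:
  assumes "second_countable X"
  obtains B :: "nat \<Rightarrow> 'a set" where "\<And>n. openin X (B n)"
    and "\<And>U x. openin X U \<Longrightarrow> x \<in> U \<Longrightarrow> \<exists>n. x \<in> B n \<and> B n \<subseteq> U"
proof -
  obtain \<B> where \<B>: "countable \<B>" "\<forall>V\<in>\<B>. openin X V"
    "\<forall>U x. openin X U \<and> x \<in> U \<longrightarrow> (\<exists>V\<in>\<B>. x \<in> V \<and> V \<subseteq> U)"
    using assms unfolding second_countable_def by blast
  \<comment> \<open>\<open>from_nat_into\<close> enumerates only nonempty countable sets, hence the extra \<open>{}\<close>.\<close>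
  let ?B = "from_nat_into (insert {} \<B>)"
  have range: "range ?B = insert {} \<B>"
    using \<B>(1) by (simp add: range_from_nat_into)
  show ?thesis
  proof (rule that)
    fix n
    have "?B n \<in> insert {} \<B>"
      using range by blast
    then show "openin X (?B n)"
      using \<B>(2) by auto
  next
    fix U x
    assume "openin X U" "x \<in> U"
    then obtain V where "V \<in> \<B>" "x \<in> V" "V \<subseteq> U"
      using \<B>(3) by blast
    moreover obtain n where "V = ?B n"
      using range \<open>V \<in> \<B>\<close> by (metis insertCI rangeE)
    ultimately show "\<exists>n. x \<in> ?B n \<and> ?B n \<subseteq> U"
      by blast
  qed
qed

lemma complete_level_family_if_convergent_strategy:
  assumes "ch_winning X \<sigma>" "ch_convergent X \<sigma>" "second_countable X"
  shows "\<exists>W. complete_level_family X W"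
proof -
  obtain B :: "nat \<Rightarrow> 'a set" where B: "\<And>n. openin X (B n)"
    "\<And>U x. openin X U \<Longrightarrow> x \<in> U \<Longrightarrow> \<exists>n. x \<in> B n \<and> B n \<subseteq> U"
    using second_countable_nat_base[OF assms(3)] by blast
  interpret convergent_winning_strategy X \<sigma> B
    using assms(1,2) B by unfold_locales
  define W where "W m = tree_family (from_nat m)" for m
  have W_to_nat: "W (to_nat j) = tree_family j" for j
    by (simp add: W_def)
  have "complete_level_family X W"
  proof
    show "openin X (W m i)" for m i
      unfolding W_def by (rule openin_tree_family)
  next
    fix U x
    assume "openin X U" "x \<in> U"
    then obtain n where n: "x \<in> B n" "B n \<subseteq> U"
      using B(2) by blast
    have "W (to_nat (Inl n :: nat + bool \<times> (nat \<times> nat) list)) = (\<lambda>_. B n)"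
      using W_to_nat by simp
    then show "\<exists>m V. W m = (\<lambda>_. V) \<and> x \<in> V \<and> V \<subseteq> U"
      using n by blast
  next
    fix s :: "nat \<Rightarrow> 'a"
    assume "range s \<subseteq> topspace X" "level_cauchy W s"
    moreover have "level_cauchy tree_family s"
      using \<open>level_cauchy W s\<close> unfolding level_cauchy_def W_to_nat[symmetric] by blast
    ultimately obtain y where "y \<in> topspace X" "level_limit tree_family s y"
      using level_limit_tree_family by blast
    then show "\<exists>y\<in>topspace X. level_limit W s y"
      unfolding level_limit_def W_def by blast
  qed
  then show ?thesis
    by blast
qed

theorem corollary3p12:
  fixes X :: "'a topology"
  assumes "t0_space X" and "second_countable X"
  shows "((\<exists>\<sigma>. ch_winning X \<sigma> \<and> ch_convergent X \<sigma>) \<longleftrightarrow>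
           (\<exists>\<sigma>. ch_winning X \<sigma> \<and> ch_stationary \<sigma> \<and> ch_convergent X \<sigma>)) \<and>
         ((\<exists>\<sigma>. ch_winning X \<sigma> \<and> ch_stationary \<sigma> \<and> ch_convergent X \<sigma>) \<longleftrightarrow>
           quasi_Polish X)"
proof -
  have "(\<exists>\<sigma>. ch_winning X \<sigma> \<and> ch_stationary \<sigma> \<and> ch_convergent X \<sigma>) \<and> quasi_Polish X"
    if \<sigma>: "ch_winning X \<sigma>" "ch_convergent X \<sigma>" for \<sigma>
  proof -
    obtain W where "complete_level_family X W"
      using complete_level_family_if_convergent_strategy[OF \<sigma> assms(2)] by blast
    then show ?thesis
      using complete_level_family.stationary_convergent_strategy
        complete_level_family.quasi_Polish[OF _ assms] by blast
  qed
  then show ?thesis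
    using quasi_Polish_imp_convergent_strategy by blast
qed

end
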